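(* Let $K>0$, let $m_1,m_2\in(0,1]$, and let $f,g:[0,K]\to[0,\infty)$ be such that $f$ is $m_1$-convex and $g$ is $m_2$-convex on $[0,K]$. Let $0\le a<b\le K$ with $a/m_1\le K$ and $a/m_2\le K$, and assume $f,g\in L^1[a,b]$. Then \[ \frac{1}{b-a}\int_a^b f(x)^{\frac{x-a}{b-a}}\, g(x)^{\frac{b-x}{b-a}}\,dx \le \frac13\left[f(b)+m_2\, g\!\left(\frac{a}{m_2}\right)\right]+\frac16\left[g(b)+m_1\, f\!\left(\frac{a}{m_1}\right)\right]. \]
   Context: For $m\in[0,1]$ and $K>0$, a function $h:[0,K]\to\mathbb{R}$ is called $m$-convex if $h(tx+m(1-t)y)\le t\,h(x)+m(1-t)\,h(y)$ for all $x,y\in[0,K]$ and $t\in[0,1]$. The convention $0^0=1$ is used in the integrand. *)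

theory Defs
  imports "HOL-Analysis.Analysis"
begin

definition m_convex_on :: "real \<Rightarrow> real \<Rightarrow> (real \<Rightarrow> real) \<Rightarrow> bool" where
  "m_convex_on K m h \<longleftrightarrow>
     (\<forall>x\<in>{0..K}. \<forall>y\<in>{0..K}. \<forall>t\<in>{0..1}.
        h (t * x + m * (1 - t) * y) \<le> t * h x + m * (1 - t) * h y)"

definition rpow :: "real \<Rightarrow> real \<Rightarrow> real" where
  "rpow x y = (if x = 0 then (if y = 0 then 1 else 0) else x powr y)"

end

theory Submission
  imports Defs
begin

text \<open>
  Write \<open>t = (x - a)/(b - a)\<close>, so that \<open>x = t b + (1 - t) a\<close> and
  \<open>(b - x)/(b - a) = 1 - t\<close>.  The weighted AM-GM (Young) inequality bounds the
  integrand \<open>f(x)^t g(x)^(1-t)\<close> by \<open>t f(x) + (1 - t) g(x)\<close>.  Writing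
  \<open>x = t b + m (1 - t) (a/m)\<close>, m-convexity bounds \<open>f(x)\<close> by
  \<open>t f(b) + m1 (1 - t) f(a/m1)\<close> and similarly for \<open>g\<close>.  Hence the integrand is
  dominated by the quadratic \<open>t\<^sup>2 A + t (1 - t) E + (1 - t)\<^sup>2 D\<close>, whose
  integral over \<open>[a,b]\<close> is \<open>(b - a)(A/3 + E/6 + D/3)\<close>.
\<close>

lemma rpow_weighted_am_gm:
  fixes u v \<alpha> \<beta> :: real
  assumes "0 \<le> u" "0 \<le> v" "0 \<le> \<alpha>" "0 \<le> \<beta>" "\<alpha> + \<beta> = 1"
  shows "rpow u \<alpha> * rpow v \<beta> \<le> \<alpha> * u + \<beta> * v"
proof (cases "u = 0 \<or> v = 0")
  case True
  with assms show ?thesis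
    by (cases "\<alpha> = 0"; cases "\<beta> = 0") (auto simp: rpow_def)
next
  case False
  with assms have "0 < u" "0 < v" by auto
  with Youngs_inequality_0[of \<alpha> \<beta> u v] assms show ?thesis
    by (simp add: rpow_def)
qed

lemma m_convex_on_segment_bound:
  fixes K m a b t :: real and h :: "real \<Rightarrow> real"
  assumes "m_convex_on K m h" "0 < m"
    and "b \<in> {0..K}" "a / m \<in> {0..K}" "t \<in> {0..1}"
  shows "h (t * b + (1 - t) * a) \<le> t * h b + m * (1 - t) * h (a / m)"
proof -
  have "t * b + (1 - t) * a = t * b + m * (1 - t) * (a / m)"
    using \<open>0 < m\<close> by simp
  with assms show ?thesis
    unfolding m_convex_on_def by metis
qed

lemma m_convex_geometric_mean_bound:
  fixes K m1 m2 a b t :: real and f g :: "real \<Rightarrow> real"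
  assumes "m_convex_on K m1 f" "m_convex_on K m2 g" "0 < m1" "0 < m2"
    and "\<And>x. x \<in> {0..K} \<Longrightarrow> f x \<ge> 0" "\<And>x. x \<in> {0..K} \<Longrightarrow> g x \<ge> 0"
    and "b \<in> {0..K}" "a / m1 \<in> {0..K}" "a / m2 \<in> {0..K}"
    and "t \<in> {0..1}" "t * b + (1 - t) * a \<in> {0..K}"
  shows "rpow (f (t * b + (1 - t) * a)) t * rpow (g (t * b + (1 - t) * a)) (1 - t)
         \<le> t\<^sup>2 * f b + t * (1 - t) * (m1 * f (a / m1) + g b) + (1 - t)\<^sup>2 * (m2 * g (a / m2))"
proof -
  define x where "x = t * b + (1 - t) * a"
  have "rpow (f x) t * rpow (g x) (1 - t) \<le> t * f x + (1 - t) * g x"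
    using rpow_weighted_am_gm assms(5,6,10,11) by (simp add: x_def)
  also have "\<dots> \<le> t * (t * f b + m1 * (1 - t) * f (a / m1))
                  + (1 - t) * (t * g b + m2 * (1 - t) * g (a / m2))"
    using m_convex_on_segment_bound[OF assms(1,3,7,8,10)]
          m_convex_on_segment_bound[OF assms(2,4,7,9,10)] assms(10)
    by (intro add_mono mult_left_mono) (auto simp: x_def)
  also have "\<dots> = t\<^sup>2 * f b + t * (1 - t) * (m1 * f (a / m1) + g b) + (1 - t)\<^sup>2 * (m2 * g (a / m2))"
    by (simp add: algebra_simps power2_eq_square)
  finally show ?thesis unfolding x_def .
qed

lemma quadratic_weights_antiderivative:
  fixes a b c A E D x :: real
  assumes "c \<noteq> 0"
  shows "((\<lambda>x. c * (A * ((x - a) / c)^3 / 3 + E * (((x - a) / c)\<^sup>2 / 2 - ((x - a) / c)^3 / 3)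
                - D * ((b - x) / c)^3 / 3))
         has_real_derivative A * ((x - a) / c)\<^sup>2 + E * ((x - a) / c - ((x - a) / c)\<^sup>2)
                + D * ((b - x) / c)\<^sup>2) (at x)"
  using assms
  by (rule_tac DERIV_cong) (auto intro!: derivative_eq_intros simp: field_simps eval_nat_numeral)

lemma quadratic_weights_has_integral:
  fixes a b A E D :: real
  assumes "a < b"
  shows "((\<lambda>x. ((x - a) / (b - a))\<^sup>2 * A + ((x - a) / (b - a)) * ((b - x) / (b - a)) * E
              + ((b - x) / (b - a))\<^sup>2 * D)
          has_integral (b - a) * (A / 3 + E / 6 + D / 3)) {a..b}"
proof -
  define c where "c = b - a"
  have c: "c \<noteq> 0" using assms by (simp add: c_def)
  define F where "F = (\<lambda>x. c * (A * ((x - a) / c)^3 / 3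
        + E * (((x - a) / c)\<^sup>2 / 2 - ((x - a) / c)^3 / 3) - D * ((b - x) / c)^3 / 3))"
  have weights: "((x - a) / c)\<^sup>2 * A + ((x - a) / c) * ((b - x) / c) * E + ((b - x) / c)\<^sup>2 * D
      = A * ((x - a) / c)\<^sup>2 + E * ((x - a) / c - ((x - a) / c)\<^sup>2) + D * ((b - x) / c)\<^sup>2" for x
  proof -
    have "(b - x) / c = 1 - (x - a) / c"
      using c by (simp add: c_def field_simps)
    moreover have "u\<^sup>2 * A + u * (1 - u) * E + (1 - u)\<^sup>2 * D
        = A * u\<^sup>2 + E * (u - u\<^sup>2) + D * (1 - u)\<^sup>2" for u :: real
      by (simp add: algebra_simps power2_eq_square)
    ultimately show ?thesis by (simp only:)
  qed
  have "((\<lambda>x. ((x - a) / c)\<^sup>2 * A + ((x - a) / c) * ((b - x) / c) * E + ((b - x) / c)\<^sup>2 * D)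
         has_integral (F b - F a)) {a..b}"
    using assms quadratic_weights_antiderivative[OF c, where a = a and b = b and A = A and E = E and D = D]
    unfolding weights F_def
    by (intro fundamental_theorem_of_calculus)
       (auto simp: has_real_derivative_iff_has_vector_derivative[symmetric]
             intro: has_field_derivative_at_within)
  moreover have "F b - F a = c * (A / 3 + E / 6 + D / 3)"
    using c unfolding F_def by (simp add: c_def field_simps)
  ultimately show ?thesis by (simp add: c_def)
qed

text \<open>Comparison with a continuous majorant of nonnegative integral.  No
  integrability of \<open>h\<close> is needed: a non-integrable \<open>h\<close> has Lebesgue integral 0.\<close>
lemma set_integral_le_by_continuous_majorant:
  fixes a b V :: real and h p :: "real \<Rightarrow> real"
  assumes "continuous_on {a..b} p" "(p has_integral V) {a..b}" "0 \<le> V"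
    and "\<And>x. x \<in> {a..b} \<Longrightarrow> h x \<le> p x"
  shows "(LINT x:{a..b}|lborel. h x) \<le> V"
proof -
  have p_int: "set_integrable lborel {a..b} p"
    using assms(1) by (rule borel_integrable_atLeastAtMost')
  have p_lint: "(LINT x:{a..b}|lborel. p x) = V"
    using set_borel_integral_eq_integral(2)[OF p_int] assms(2) by (simp add: integral_unique)
  show ?thesis
  proof (cases "set_integrable lborel {a..b} h")
    case True
    show ?thesis
      using set_integral_mono[OF True p_int assms(4)] p_lint by simp
  next
    case False
    then have "(LINT x:{a..b}|lborel. h x) = 0"
      unfolding set_lebesgue_integral_def set_integrable_def by (simp add: not_integrable_integral_eq)
    with assms(3) show ?thesis by simp
  qed
qed

theorem theorem3:
  fixes K m1 m2 a b :: real and f g :: "real \<Rightarrow> real"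
  assumes "K > 0"
    and "0 < m1" "m1 \<le> 1" and "0 < m2" "m2 \<le> 1"
    and "\<And>x. x \<in> {0..K} \<Longrightarrow> f x \<ge> 0"
    and "\<And>x. x \<in> {0..K} \<Longrightarrow> g x \<ge> 0"
    and "m_convex_on K m1 f" and "m_convex_on K m2 g"
    and "0 \<le> a" "a < b" "b \<le> K"
    and "a / m1 \<le> K" "a / m2 \<le> K"
    and "set_integrable lborel {a..b} f" and "set_integrable lborel {a..b} g"
  shows "1 / (b - a) * (LINT x:{a..b}|lborel. rpow (f x) ((x - a) / (b - a)) * rpow (g x) ((b - x) / (b - a)))
         \<le> 1/3 * (f b + m2 * g (a / m2)) + 1/6 * (g b + m1 * f (a / m1))"
proof -
  define A where "A = f b"
  define E where "E = m1 * f (a / m1) + g b"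
  define D where "D = m2 * g (a / m2)"
  define P where "P = (\<lambda>x. ((x - a) / (b - a))\<^sup>2 * A + ((x - a) / (b - a)) * ((b - x) / (b - a)) * E
                        + ((b - x) / (b - a))\<^sup>2 * D)"
  have pts: "b \<in> {0..K}" "a / m1 \<in> {0..K}" "a / m2 \<in> {0..K}"
    using assms by auto
  have "0 \<le> A" "0 \<le> E" "0 \<le> D"
    using assms(2,4,6,7) pts by (auto simp: A_def E_def D_def)
  then have V_nonneg: "0 \<le> (b - a) * (A / 3 + E / 6 + D / 3)"
    using assms(11) by simp
  have bound: "rpow (f x) ((x - a) / (b - a)) * rpow (g x) ((b - x) / (b - a)) \<le> P x"
    if x: "x \<in> {a..b}" for x
  proof -
    define t where "t = (x - a) / (b - a)"
    have ba: "0 < b - a" using assms(11) by simp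
    have t: "t \<in> {0..1}" "(b - x) / (b - a) = 1 - t"
      using x ba by (auto simp: t_def field_simps)
    have "t * (b - a) = x - a"
      using ba by (simp add: t_def)
    then have x_eq: "x = t * b + (1 - t) * a"
      by (simp add: algebra_simps)
    have "x \<in> {0..K}" using x assms by auto
    from m_convex_geometric_mean_bound[OF assms(8,9,2,4,6,7) pts t(1) this[unfolded x_eq]]
    show ?thesis
      unfolding P_def t_def[symmetric] t(2) x_eq[symmetric] A_def E_def D_def
      by (simp add: mult.commute)
  qed
  have "continuous_on {a..b} P"
    using assms(11) unfolding P_def by (intro continuous_intros) auto
  from set_integral_le_by_continuous_majorant[OF this
      quadratic_weights_has_integral[OF assms(11), of A E D, folded P_def] V_nonneg bound]
  show ?thesis
    using assms(11) unfolding A_def E_def D_def by (simp add: field_simps)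
qed

end
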